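(* Let $\Gamma_1,\Gamma_2$ be finite abelian groups with $|\Gamma_1|=2a+1$ and $|\Gamma_2|=2b+1$. Suppose that $2a+1$ divides $2b+1$ and that there exists a $\mathrm{M}^0_{\Gamma_2^*}(2,b;b,2)$. Then there exists a $\mathrm{M}^0_{\Gamma^*}(2,a+b+2ab;\,a+b+2ab,2)$, where $\Gamma=\Gamma_1\oplus\Gamma_2$.
   Context: For an abelian group $\Gamma$ and $\Omega\subseteq\Gamma$, a zero-sum magic partially filled array $\mathrm{M}^0_\Omega(m,n;s,k)$ is an $m\times n$ array, some cells of which may be empty, with entries in $\Omega$ in which every element of $\Omega$ appears exactly once, each row has exactly $s$ and each column exactly $k$ filled cells, and all row and column sums equal $0_\Gamma$. In particular $\mathrm{M}^0_\Omega(2,n;n,2)$ is a $2\times n$ array with no empty cells. $\Gamma^*=\Gamma\setminus\{0_\Gamma\}$. *)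

theory Defs
  imports Main "HOL-Library.Product_Plus"
begin

text \<open>A partially filled m x n array over an abelian group is modelled as a map
  A :: nat => nat => 'a option, rows indexed by i < m, columns by j < n;
  None = empty cell.\<close>

definition filled_cells :: "nat \<Rightarrow> nat \<Rightarrow> (nat \<Rightarrow> nat \<Rightarrow> 'a option) \<Rightarrow> (nat \<times> nat) set" where
  "filled_cells m n A = {(i, j). i < m \<and> j < n \<and> A i j \<noteq> None}"

definition row_cells :: "nat \<Rightarrow> (nat \<Rightarrow> nat \<Rightarrow> 'a option) \<Rightarrow> nat \<Rightarrow> nat set" where
  "row_cells n A i = {j. j < n \<and> A i j \<noteq> None}"

definition col_cells :: "nat \<Rightarrow> (nat \<Rightarrow> nat \<Rightarrow> 'a option) \<Rightarrow> nat \<Rightarrow> nat set" where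
  "col_cells m A j = {i. i < m \<and> A i j \<noteq> None}"

definition zero_sum_magic_pfa ::
  "'a::ab_group_add set \<Rightarrow> nat \<Rightarrow> nat \<Rightarrow> nat \<Rightarrow> nat \<Rightarrow> (nat \<Rightarrow> nat \<Rightarrow> 'a option) \<Rightarrow> bool" where
  "zero_sum_magic_pfa \<Omega> m n s k A \<longleftrightarrow>
     (\<forall>i j. (m \<le> i \<or> n \<le> j) \<longrightarrow> A i j = None)
   \<and> bij_betw (\<lambda>(i, j). the (A i j)) (filled_cells m n A) \<Omega>
   \<and> (\<forall>i<m. card (row_cells n A i) = s)
   \<and> (\<forall>j<n. card (col_cells m A j) = k)
   \<and> (\<forall>i<m. (\<Sum>j\<in>row_cells n A i. the (A i j)) = 0)
   \<and> (\<forall>j<n. (\<Sum>i\<in>col_cells m A j. the (A i j)) = 0)"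

end

theory Submission imports Defs begin

text \<open>A zero-sum array with two full rows is determined by its first row R, the second
  row being -R. So it amounts to choosing one element from every pair {x, -x} of \<Omega> such that
  the chosen elements sum to 0. For \<Gamma>1 \<times> \<Gamma>2 take {0} \<times> R2, with R2 the first row of the given
  array, together with R1 \<times> \<Gamma>2 for an arbitrary such choice R1 in \<Gamma>1 - {0} (which exists as
  \<Gamma>1 has odd order). The second part sums to (|\<Gamma>2| \<Sigma>R1, |R1| \<Sigma>\<Gamma>2), which vanishes because
  |\<Gamma>1| divides |\<Gamma>2| and \<Gamma>2 has odd order.\<close>

definition negation_half :: "'a::ab_group_add set \<Rightarrow> 'a set \<Rightarrow> bool" where
  "negation_half \<Omega> R \<longleftrightarrow> R \<inter> uminus ` R = {} \<and> R \<union> uminus ` R = \<Omega>"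

lemma negation_half_iff:
  "negation_half \<Omega> R \<longleftrightarrow> (\<forall>x\<in>R. - x \<notin> R) \<and> (\<forall>x. x \<in> \<Omega> \<longleftrightarrow> x \<in> R \<or> - x \<in> R)"
  unfolding negation_half_def by (auto simp: image_iff) (metis minus_minus)+

lemma card_negation_half:
  assumes "finite \<Omega>" and "negation_half \<Omega> R"
  shows "card \<Omega> = 2 * card R"
proof -
  have "finite R" using assms by (auto simp: negation_half_def intro: finite_subset)
  then have "card \<Omega> = card R + card (uminus ` R)"
    using assms(2) card_Un_disjoint[of R "uminus ` R"] by (simp add: negation_half_def)
  then show ?thesis by (simp add: card_image)
qed

lemma ex_negation_half:
  fixes \<Omega> :: "'a::ab_group_add set"
  assumes "finite \<Omega>" and "\<And>x. x \<in> \<Omega> \<Longrightarrow> - x \<in> \<Omega>" and "\<And>x. x \<in> \<Omega> \<Longrightarrow> - x \<noteq> x"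
  shows "\<exists>R. negation_half \<Omega> R"
proof -
  obtain h :: "'a \<Rightarrow> nat" where h: "inj_on h \<Omega>"
    using finite_imp_inj_to_nat_seg[OF assms(1)] by blast
  define R where "R = {x \<in> \<Omega>. h x < h (- x)}"
  have "x \<in> R \<union> uminus ` R" if "x \<in> \<Omega>" for x
  proof (cases "h x < h (- x)")
    case True
    then show ?thesis using that by (simp add: R_def)
  next
    case False
    moreover have "h x \<noteq> h (- x)"
      using inj_onD[OF h] assms(2,3) that by metis
    ultimately have "- x \<in> R"
      using assms(2) that by (simp add: R_def)
    then show ?thesis by (metis UnI2 image_eqI minus_minus)
  qed
  then have "R \<union> uminus ` R = \<Omega>"
    using assms(2) by (auto simp: R_def)
  moreover have "R \<inter> uminus ` R = {}"
    by (auto simp: R_def)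
  ultimately show ?thesis by (auto simp: negation_half_def)
qed

lemma sum_UNIV_const_eq_0:
  fixes x :: "'a::{ab_group_add, finite}"
  shows "(\<Sum>_\<in>(UNIV :: 'a set). x) = 0"
proof -
  have "(\<Sum>g\<in>UNIV. g) = (\<Sum>g\<in>UNIV. x + g)"
    using sum.reindex_bij_betw[OF bij_plus[of x], of "\<lambda>g. g"] by simp
  then show ?thesis by (simp add: sum.distrib)
qed

lemma sum_const_eq_0_if_card_dvd:
  fixes x :: "'a::{ab_group_add, finite}"
  assumes "finite B" and "card (UNIV :: 'a set) dvd card B"
  shows "(\<Sum>_\<in>B. x) = 0"
proof -
  obtain k where "card B = k * card (UNIV :: 'a set)"
    using assms(2) by (auto simp: mult.commute elim!: dvdE)
  then have "card ({..<k} \<times> (UNIV :: 'a set)) = card B"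
    by (simp add: card_cartesian_product)
  moreover have "finite ({..<k} \<times> (UNIV :: 'a set))"
    by simp
  ultimately obtain e where "bij_betw e ({..<k} \<times> (UNIV :: 'a set)) B"
    using finite_same_card_bij assms(1) by metis
  then have "(\<Sum>_\<in>B. x) = (\<Sum>_\<in>{..<k} \<times> (UNIV :: 'a set). x)"
    by (rule sum.reindex_bij_betw[symmetric])
  also have "\<dots> = (\<Sum>i<k. \<Sum>_\<in>(UNIV :: 'a set). x)"
    by (simp add: sum.cartesian_product)
  finally show ?thesis by (simp add: sum_UNIV_const_eq_0)
qed

lemma eq_0_if_add_self_eq_0:
  fixes x :: "'a::{ab_group_add, finite}"
  assumes "odd (card (UNIV :: 'a set))" and "x + x = 0"
  shows "x = 0"
proof -
  obtain b where b: "card (UNIV :: 'a set) = Suc (2 * b)"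
    using assms(1) oddE by fastforce
  have "(\<Sum>_<2 * m. x) = (\<Sum>_<m. x + x)" for m :: nat
    by (induction m) (simp_all add: add_ac)
  then have "(\<Sum>_<card (UNIV :: 'a set). x) = x"
    using assms(2) b by simp
  moreover have "(\<Sum>_<card (UNIV :: 'a set). x) = 0"
    by (rule sum_const_eq_0_if_card_dvd) simp_all
  ultimately show ?thesis by simp
qed

lemma sum_UNIV_eq_0_if_odd_card:
  assumes "odd (card (UNIV :: 'a::{ab_group_add, finite} set))"
  shows "(\<Sum>g\<in>(UNIV :: 'a set). g) = 0"
proof -
  have "(\<Sum>g\<in>(UNIV :: 'a set). g) = (\<Sum>g\<in>UNIV. - g)"
    using sum.reindex_bij_betw[OF bij_uminus, of "\<lambda>g :: 'a. g"] by simp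
  then have "(\<Sum>g\<in>(UNIV :: 'a set). g) + (\<Sum>g\<in>UNIV. g) = 0"
    by (simp add: sum_negf eq_neg_iff_add_eq_0)
  then show ?thesis by (rule eq_0_if_add_self_eq_0[OF assms])
qed

definition two_row_array :: "nat \<Rightarrow> (nat \<Rightarrow> 'a::uminus) \<Rightarrow> nat \<Rightarrow> nat \<Rightarrow> 'a option" where
  "two_row_array n f = (\<lambda>i j. if i < 2 \<and> j < n then Some (if i = 0 then f j else - f j) else None)"

lemma bij_betw_signed_copies_iff:
  fixes f :: "nat \<Rightarrow> 'a::ab_group_add"
  shows "bij_betw (\<lambda>(i, j). if i = 0 then f j else - f j) ({0, 1::nat} \<times> I) \<Omega>
     \<longleftrightarrow> inj_on f I \<and> negation_half \<Omega> (f ` I)"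
    (is "bij_betw ?g _ _ \<longleftrightarrow> _")
proof
  assume bij: "bij_betw ?g ({0, 1} \<times> I) \<Omega>"
  then have inj: "inj_on ?g ({0, 1} \<times> I)" and img: "?g ` ({0, 1} \<times> I) = \<Omega>"
    by (auto simp: bij_betw_def)
  have "inj_on f I"
    using inj_onD[OF inj, of "(0, _)" "(0, _)"] by (auto intro: inj_onI)
  moreover have "f j \<noteq> - f k" if "j \<in> I" "k \<in> I" for j k
    using inj_onD[OF inj, of "(0, j)" "(1, k)"] that by auto
  then have "f ` I \<inter> uminus ` f ` I = {}" by auto
  moreover have "f ` I \<union> uminus ` f ` I = \<Omega>"
    using img by (auto simp: image_iff)
  ultimately show "inj_on f I \<and> negation_half \<Omega> (f ` I)"
    by (simp add: negation_half_def)
next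
  assume "inj_on f I \<and> negation_half \<Omega> (f ` I)"
  then have inj: "inj_on f I" and disj: "\<And>j k. j \<in> I \<Longrightarrow> k \<in> I \<Longrightarrow> f j \<noteq> - f k"
    and un: "f ` I \<union> uminus ` f ` I = \<Omega>"
    by (auto simp: negation_half_def)
  have "inj_on ?g ({0, 1} \<times> I)"
  proof (rule inj_onI)
    fix p q
    assume "p \<in> {0, 1} \<times> I" "q \<in> {0, 1} \<times> I" "?g p = ?g q"
    then show "p = q"
      using inj_onD[OF inj] disj by (cases p; cases q) (auto split: if_splits dest: sym)
  qed
  moreover have "?g ` ({0, 1} \<times> I) = \<Omega>"
    using un by (auto simp: image_iff)
  ultimately show "bij_betw ?g ({0, 1} \<times> I) \<Omega>"
    by (simp add: bij_betw_def)
qed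

lemma zero_sum_magic_pfa_two_row_array_iff:
  fixes f :: "nat \<Rightarrow> 'a::ab_group_add"
  shows "zero_sum_magic_pfa \<Omega> 2 n n 2 (two_row_array n f)
     \<longleftrightarrow> inj_on f {..<n} \<and> negation_half \<Omega> (f ` {..<n}) \<and> (\<Sum>j<n. f j) = 0"
proof -
  let ?A = "two_row_array n f"
  have cells: "filled_cells 2 n ?A = {0, 1} \<times> {..<n}"
    by (auto simp: filled_cells_def two_row_array_def)
  have rows: "row_cells n ?A i = {..<n}" if "i < 2" for i
    using that by (auto simp: row_cells_def two_row_array_def)
  have cols: "col_cells 2 ?A j = {0, 1}" if "j < n" for j
    using that by (auto simp: col_cells_def two_row_array_def)
  have outside: "\<forall>i j. (2 \<le> i \<or> n \<le> j) \<longrightarrow> ?A i j = None"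
    by (simp add: two_row_array_def)
  have cards: "(\<forall>i<2. card (row_cells n ?A i) = n) \<and> (\<forall>j<n. card (col_cells 2 ?A j) = 2)"
    using rows cols by simp
  have col_sums: "\<forall>j<n. (\<Sum>i\<in>col_cells 2 ?A j. the (?A i j)) = 0"
    using cols by (simp add: two_row_array_def)
  have row_sums: "(\<forall>i<2. (\<Sum>j\<in>row_cells n ?A i. the (?A i j)) = 0) \<longleftrightarrow> (\<Sum>j<n. f j) = 0"
    using rows[of 0] rows[of 1] by (auto simp: two_row_array_def less_2_cases_iff sum_negf)
  have "bij_betw (\<lambda>(i, j). the (?A i j)) ({0, 1} \<times> {..<n}) \<Omega>
      \<longleftrightarrow> bij_betw (\<lambda>(i, j). if i = 0 then f j else - f j) ({0, 1::nat} \<times> {..<n}) \<Omega>"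
    by (rule bij_betw_cong) (auto simp: two_row_array_def)
  then show ?thesis
    unfolding zero_sum_magic_pfa_def cells bij_betw_signed_copies_iff
    using outside cards col_sums row_sums by blast
qed

lemma zero_sum_magic_pfa_2_eq_two_row_array:
  fixes A :: "nat \<Rightarrow> nat \<Rightarrow> 'a::ab_group_add option"
  assumes "zero_sum_magic_pfa \<Omega> 2 n n 2 A"
  shows "A = two_row_array n (\<lambda>j. the (A 0 j))"
proof -
  have outside: "\<And>i j. 2 \<le> i \<or> n \<le> j \<Longrightarrow> A i j = None"
    and row_card: "\<And>i. i < 2 \<Longrightarrow> card (row_cells n A i) = n"
    and col_sum: "\<And>j. j < n \<Longrightarrow> (\<Sum>i\<in>col_cells 2 A j. the (A i j)) = 0"
    using assms unfolding zero_sum_magic_pfa_def by blast+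
  have "row_cells n A i = {..<n}" if "i < 2" for i
    using row_card[OF that] by (intro card_subset_eq) (auto simp: row_cells_def)
  then have filled: "A i j \<noteq> None" if "i < 2" "j < n" for i j
    using that by (auto simp: row_cells_def)
  have second_row: "the (A 1 j) = - the (A 0 j)" if "j < n" for j
  proof -
    have "col_cells 2 A j = {0, 1}"
      using filled that by (auto simp: col_cells_def)
    then show ?thesis
      using col_sum[OF that] by (simp add: eq_neg_iff_add_eq_0 add.commute)
  qed
  show ?thesis
  proof (intro ext)
    fix i j
    show "A i j = two_row_array n (\<lambda>j. the (A 0 j)) i j"
    proof (cases "i < 2 \<and> j < n")
      case True
      then show ?thesis
        using filled[of i j] second_row[of j] by (auto simp: two_row_array_def less_2_cases_iff)
    next
      case False
      then show ?thesis using outside by (auto simp: two_row_array_def)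
    qed
  qed
qed

lemma ex_zero_sum_magic_pfa_2_iff:
  fixes \<Omega> :: "'a::ab_group_add set"
  shows "(\<exists>A. zero_sum_magic_pfa \<Omega> 2 n n 2 A)
     \<longleftrightarrow> (\<exists>R. finite R \<and> negation_half \<Omega> R \<and> \<Sum>R = 0 \<and> card R = n)"
proof
  assume "\<exists>A. zero_sum_magic_pfa \<Omega> 2 n n 2 A"
  then obtain A where A: "zero_sum_magic_pfa \<Omega> 2 n n 2 A" ..
  define f where "f j = the (A 0 j)" for j
  from A have "zero_sum_magic_pfa \<Omega> 2 n n 2 (two_row_array n f)"
    unfolding f_def by (subst (asm) zero_sum_magic_pfa_2_eq_two_row_array[OF A])
  then have "inj_on f {..<n}" "negation_half \<Omega> (f ` {..<n})" "(\<Sum>j<n. f j) = 0"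
    by (simp_all add: zero_sum_magic_pfa_two_row_array_iff)
  moreover have "\<Sum>(f ` {..<n}) = (\<Sum>j<n. f j)"
    using sum.reindex[OF \<open>inj_on f {..<n}\<close>, of "\<lambda>x. x"] by simp
  ultimately show "\<exists>R. finite R \<and> negation_half \<Omega> R \<and> \<Sum>R = 0 \<and> card R = n"
    by (metis card_image card_lessThan finite_imageI finite_lessThan)
next
  assume "\<exists>R. finite R \<and> negation_half \<Omega> R \<and> \<Sum>R = 0 \<and> card R = n"
  then obtain R where R: "finite R" "negation_half \<Omega> R" "\<Sum>R = 0" "card R = n"
    by blast
  then obtain f where f: "bij_betw f {..<n} R"
    using ex_bij_betw_nat_finite[OF R(1)] R(4) by (auto simp: atLeast0LessThan)
  then have "inj_on f {..<n}" "f ` {..<n} = R"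
    by (auto simp: bij_betw_def)
  then have "zero_sum_magic_pfa \<Omega> 2 n n 2 (two_row_array n f)"
    using R sum.reindex[of f "{..<n}" id] by (simp add: zero_sum_magic_pfa_two_row_array_iff)
  then show "\<exists>A. zero_sum_magic_pfa \<Omega> 2 n n 2 A" by blast
qed

lemma negation_half_product:
  fixes R1 :: "'a::ab_group_add set" and R2 :: "'b::ab_group_add set"
  assumes R1: "negation_half (UNIV - {0}) R1" and R2: "negation_half (UNIV - {0}) R2"
  shows "negation_half (UNIV - {0}) (Pair 0 ` R2 \<union> R1 \<times> UNIV)"
proof -
  define R where "R = Pair 0 ` R2 \<union> R1 \<times> (UNIV :: 'b set)"
  have R1_neg: "- g \<notin> R1" if "g \<in> R1" for g
    using R1 that unfolding negation_half_iff by blast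
  have R2_neg: "- y \<notin> R2" if "y \<in> R2" for y
    using R2 that unfolding negation_half_iff by blast
  have R1_mem: "g \<in> R1 \<or> - g \<in> R1 \<longleftrightarrow> g \<noteq> 0" for g
    using R1 unfolding negation_half_iff by blast
  have R2_mem: "y \<in> R2 \<or> - y \<in> R2 \<longleftrightarrow> y \<noteq> 0" for y
    using R2 unfolding negation_half_iff by blast
  have mem_R: "(g, y) \<in> R \<longleftrightarrow> (if g = 0 then y \<in> R2 else g \<in> R1)" for g y
    using R1_mem[of 0] by (auto simp: R_def)
  have "- p \<notin> R" if "p \<in> R" for p
    using that R1_neg R2_neg by (cases p) (auto simp: mem_R split: if_splits)
  moreover have "p \<in> UNIV - {0} \<longleftrightarrow> p \<in> R \<or> - p \<in> R" for p
    using R1_mem R2_mem by (cases p) (auto simp: mem_R zero_prod_def)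
  ultimately show ?thesis
    unfolding R_def[symmetric] negation_half_iff by blast
qed

lemma sum_product_half_eq_0:
  fixes R1 :: "'a::{ab_group_add, finite} set" and R2 :: "'b::{ab_group_add, finite} set"
  assumes "card (UNIV :: 'a set) dvd card (UNIV :: 'b set)" and "odd (card (UNIV :: 'b set))"
    and "0 \<notin> R1" and "\<Sum>R2 = 0"
  shows "\<Sum>(Pair 0 ` R2 \<union> R1 \<times> UNIV) = 0"
proof -
  have "\<Sum>(Pair 0 ` R2) = (\<Sum>y\<in>R2. (0, y))"
    by (simp add: sum.reindex inj_on_def)
  also have "\<dots> = (0, \<Sum>R2)"
    by (simp add: sum_prod)
  finally have first: "\<Sum>(Pair 0 ` R2) = (0, \<Sum>R2)" .
  have "\<Sum>(R1 \<times> (UNIV :: 'b set)) = (\<Sum>g\<in>R1. \<Sum>y\<in>UNIV. (g, y))"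
    by (simp add: sum.cartesian_product)
  also have "\<dots> = (\<Sum>g\<in>R1. (\<Sum>_\<in>(UNIV :: 'b set). g, \<Sum>UNIV))"
    by (simp add: sum_prod)
  also have "\<dots> = 0"
    using assms(1,2) by (simp add: sum_const_eq_0_if_card_dvd sum_UNIV_eq_0_if_odd_card flip: zero_prod_def)
  finally have second: "\<Sum>(R1 \<times> (UNIV :: 'b set)) = 0" .
  have "Pair 0 ` R2 \<inter> R1 \<times> UNIV = {}"
    using assms(3) by auto
  then show ?thesis
    using first second assms(4) by (simp add: sum.union_disjoint flip: zero_prod_def)
qed

theorem mainTheorem16:
  fixes a b :: nat
  assumes "card (UNIV :: 'g1::{ab_group_add, finite} set) = 2 * a + 1"
    and "card (UNIV :: 'g2::{ab_group_add, finite} set) = 2 * b + 1"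
    and "(2 * a + 1) dvd (2 * b + 1)"
    and "\<exists>A :: nat \<Rightarrow> nat \<Rightarrow> 'g2 option.
           zero_sum_magic_pfa (UNIV - {0}) 2 b b 2 A"
  shows "\<exists>A :: nat \<Rightarrow> nat \<Rightarrow> ('g1 \<times> 'g2) option.
           zero_sum_magic_pfa (UNIV - {0}) 2 (a + b + 2 * a * b) (a + b + 2 * a * b) 2 A"
proof -
  obtain R2 :: "'g2 set" where R2: "negation_half (UNIV - {0}) R2" "\<Sum>R2 = 0"
    using assms(4) unfolding ex_zero_sum_magic_pfa_2_iff by blast
  have "odd (card (UNIV :: 'g1 set))"
    using assms(1) by simp
  then have "- g \<noteq> g" if "g \<noteq> 0" for g :: 'g1
    using eq_0_if_add_self_eq_0 that by (metis add.left_inverse)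
  then have "\<exists>R1. negation_half (UNIV - {0 :: 'g1}) R1"
    by (intro ex_negation_half) auto
  then obtain R1 :: "'g1 set" where R1: "negation_half (UNIV - {0}) R1" ..
  define R where "R = Pair 0 ` R2 \<union> R1 \<times> (UNIV :: 'g2 set)"
  have half: "negation_half (UNIV - {0}) R"
    unfolding R_def using R1 R2(1) by (rule negation_half_product)
  have sum: "\<Sum>R = 0"
    unfolding R_def using assms(1-3) R1 R2(2)
    by (intro sum_product_half_eq_0) (auto simp: negation_half_def)
  have "card (UNIV - {0 :: 'g1 \<times> 'g2}) = 2 * card R"
    using half by (simp add: card_negation_half)
  moreover have "card (UNIV :: ('g1 \<times> 'g2) set) = (2 * a + 1) * (2 * b + 1)"
    using assms(1,2) by (metis UNIV_Times_UNIV card_cartesian_product)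
  ultimately have "card R = a + b + 2 * a * b"
    by (simp add: card_Diff_singleton algebra_simps)
  then show ?thesis
    unfolding ex_zero_sum_magic_pfa_2_iff using finite[of R] half sum by blast
qed

end
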